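(* Every Cantor space $(X,d)$ has the property*.
   Context: A Cantor space is a compact metric space $(X,d)$ with no isolated points that is totally disconnected (equivalently, of topological dimension zero). $\mathcal{H}(X)$ denotes the set of homeomorphisms of $X$. For continuous maps $f,g:X\to X$ let $d_{C^0}(f,g)=\sup_{x\in X}d(f(x),g(x))$, and for $f,g\in\mathcal{H}(X)$ let $D(f,g)=\max\{d_{C^0}(f,g),d_{C^0}(f^{-1},g^{-1})\}$. An $n$-tuple $(x_1,\dots,x_n)\in X^n$ is proper if $x_i\neq x_j$ for all $1\le i<j\le n$. On $X^n$ use $d_n(\zeta,\eta)=\max_{1\le i\le n}d(x_i,y_i)$ for $\zeta=(x_1,\dots,x_n)$, $\eta=(y_1,\dots,y_n)$, and for a map $\phi$ write $\phi^{(n)}(\zeta)=(\phi(x_1),\dots,\phi(x_n))$. A compact metric space $(X,d)$ has the property* if for every $\epsilon>0$ there is $\delta>0$ such that for every integer $n\ge1$ and every pair of proper $n$-tuples $\zeta,\eta\in X^n$ with $d_n(\zeta,\eta)<\delta$, there exists $\phi\in\mathcal{H}(X)$ with $D(\phi,\mathrm{id}_X)<\epsilon$ and $\phi^{(n)}(\zeta)=\eta$. *)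

theory Defs
  imports "HOL-Analysis.Analysis"
begin

definition totally_disconnected :: "'a::topological_space set \<Rightarrow> bool" where
  "totally_disconnected X \<longleftrightarrow> (\<forall>T. T \<subseteq> X \<and> connected T \<longrightarrow> (\<exists>a. T \<subseteq> {a}))"

definition cantor_space :: "'a::metric_space set \<Rightarrow> bool" where
  "cantor_space X \<longleftrightarrow> compact X \<and> (\<forall>x\<in>X. x islimpt X) \<and> totally_disconnected X"

definition dC0 :: "'a::metric_space set \<Rightarrow> ('a \<Rightarrow> 'a) \<Rightarrow> ('a \<Rightarrow> 'a) \<Rightarrow> real" where
  "dC0 X f g = (SUP x\<in>X. dist (f x) (g x))"

definition dn :: "'a::metric_space list \<Rightarrow> 'a list \<Rightarrow> real" where
  "dn zs ys = Max {dist (zs ! i) (ys ! i) | i. i < length zs}"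

definition property_star :: "'a::metric_space set \<Rightarrow> bool" where
  "property_star X \<longleftrightarrow>
     (\<forall>\<epsilon>>0. \<exists>\<delta>>0. \<forall>n::nat. n \<ge> 1 \<longrightarrow>
        (\<forall>zs ys. length zs = n \<and> length ys = n \<and> set zs \<subseteq> X \<and> set ys \<subseteq> X \<and>
                 distinct zs \<and> distinct ys \<and> dn zs ys < \<delta> \<longrightarrow>
           (\<exists>\<phi> \<psi>. homeomorphism X X \<phi> \<psi> \<and> max (dC0 X \<phi> id) (dC0 X \<psi> id) < \<epsilon>
                   \<and> map \<phi> zs = ys)))"

end

theory Submission
  imports Defs
begin

text \<open>Given \<epsilon>, cut X into finitely many clopen pieces of diameter < \<epsilon> and let \<delta> be a
  Lebesgue number of this partition, so that \<delta>-close points z_i, y_i lie in a common piece.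
  Pairing every piece with itself is then a matching of X with itself compatible with the points.
  By Brouwer's argument any such matching between Cantor spaces A and B extends to a homeomorphism:
  refine it step by step into matchings of mesh 1/k, pairing the pieces containing z_i with those
  containing y_i (possible because nonempty clopen subsets of a Cantor space can be split into
  any prescribed number of clopen pieces); the nested partner pieces of the pieces containing x
  shrink to a point h x. The resulting h keeps every piece of the initial partition, and so moves
  points by less than \<epsilon>, and maps z_i to y_i.\<close>

lemma diameter_le_dist_bound:
  fixes S :: "'a::metric_space set"
  assumes "S \<noteq> {}" "\<And>x y. x \<in> S \<Longrightarrow> y \<in> S \<Longrightarrow> dist x y \<le> d"
  shows "diameter S \<le> d"
  using assms unfolding diameter_def by (auto intro!: cSUP_least)

lemma finite_set_separated:
  fixes S :: "'a::metric_space set"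
  assumes "finite S"
  obtains d where "d > 0" "\<And>x y. x \<in> S \<Longrightarrow> y \<in> S \<Longrightarrow> x \<noteq> y \<Longrightarrow> d \<le> dist x y"
proof -
  have "\<forall>a\<in>S. \<exists>\<delta>. \<delta> > 0 \<and> (\<forall>x\<in>S. x \<noteq> a \<longrightarrow> \<delta> \<le> dist a x)"
    using finite_set_avoid[OF assms] by blast
  then obtain \<delta> where \<delta>: "\<forall>a\<in>S. \<delta> a > 0 \<and> (\<forall>x\<in>S. x \<noteq> a \<longrightarrow> \<delta> a \<le> dist a x)"
    by (rule bchoice[THEN exE])
  define d where "d = Min (insert 1 (\<delta> ` S))"
  have "d > 0" using \<delta> assms by (simp add: d_def)
  moreover have "d \<le> dist x y" if "x \<in> S" "y \<in> S" "x \<noteq> y" for x y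
  proof -
    have "d \<le> \<delta> x" using assms that(1) by (simp add: d_def)
    also have "\<dots> \<le> dist x y" using \<delta> that by auto
    finally show ?thesis .
  qed
  ultimately show ?thesis using that by blast
qed

lemma bij_betw_extend:
  assumes "finite A" "finite B" "card A = card B"
    and "inj_on f I" "f ` I \<subseteq> A" "inj_on g I" "g ` I \<subseteq> B"
  obtains r where "bij_betw r A B" "\<And>i. i \<in> I \<Longrightarrow> r (f i) = g i"
proof -
  have "finite I" using finite_imageD[OF finite_subset[OF assms(5,1)] assms(4)] .
  then have "card (A - f ` I) = card (B - g ` I)"
    using assms by (simp add: card_Diff_subset card_image)
  then obtain r0 where r0: "bij_betw r0 (A - f ` I) (B - g ` I)"
    using finite_same_card_bij[OF finite_Diff[OF assms(1)] finite_Diff[OF assms(2)]] by blast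
  define r where "r x = (if x \<in> f ` I then g (inv_into I f x) else r0 x)" for x
  have "bij_betw (g \<circ> inv_into I f) (f ` I) (g ` I)"
    using bij_betw_inv_into[OF inj_on_imp_bij_betw[OF assms(4)]] inj_on_imp_bij_betw[OF assms(6)]
    by (rule bij_betw_trans)
  then have "bij_betw r (f ` I) (g ` I)" by (rule bij_betw_cong[THEN iffD1, rotated]) (simp add: r_def)
  moreover have "bij_betw r (A - f ` I) (B - g ` I)"
    using r0 by (rule bij_betw_cong[THEN iffD1, rotated]) (simp add: r_def)
  ultimately have "bij_betw r (f ` I \<union> (A - f ` I)) (g ` I \<union> (B - g ` I))"
    by (rule bij_betw_combine) blast
  then have "bij_betw r A B" using assms(5,7) by (simp add: Un_absorb1)
  moreover have "r (f i) = g i" if "i \<in> I" for i using assms(4) that by (simp add: r_def)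
  ultimately show ?thesis using that by blast
qed

section \<open>Relatively clopen sets and Cantor spaces\<close>

definition clopen_in :: "'a::metric_space set \<Rightarrow> 'a set \<Rightarrow> bool" where
  "clopen_in A W \<longleftrightarrow> W \<subseteq> A \<and> closed W \<and> closed (A - W)"

lemma clopen_in_subset: "clopen_in A W \<Longrightarrow> W \<subseteq> A"
  by (simp add: clopen_in_def)

lemma clopen_in_trans: "clopen_in A P \<Longrightarrow> clopen_in P W \<Longrightarrow> clopen_in A W"
proof -
  assume a: "clopen_in A P" "clopen_in P W"
  then have "A - W = (A - P) \<union> (P - W)" by (auto simp: clopen_in_def)
  then show ?thesis using a by (auto simp: clopen_in_def)
qed

lemma clopen_in_Diff: "clopen_in A U \<Longrightarrow> clopen_in A V \<Longrightarrow> clopen_in A (U - V)"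
proof -
  assume a: "clopen_in A U" "clopen_in A V"
  then have "A - (U - V) = (A - U) \<union> V" "U - V = U \<inter> (A - V)" by (auto simp: clopen_in_def)
  then show ?thesis using a by (auto simp: clopen_in_def)
qed

lemma clopen_in_Un: "clopen_in A U \<Longrightarrow> clopen_in A V \<Longrightarrow> clopen_in A (U \<union> V)"
proof -
  assume a: "clopen_in A U" "clopen_in A V"
  have "A - (U \<union> V) = (A - U) \<inter> (A - V)" by auto
  then show ?thesis using a by (auto simp: clopen_in_def)
qed

lemma clopen_in_Union:
  "finite F \<Longrightarrow> closed A \<Longrightarrow> (\<And>W. W \<in> F \<Longrightarrow> clopen_in A W) \<Longrightarrow> clopen_in A (\<Union>F)"
  by (induction F rule: finite_induct) (auto simp: clopen_in_def[of A "{}"] intro: clopen_in_Un)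

lemma clopen_in_compact: "compact A \<Longrightarrow> clopen_in A W \<Longrightarrow> compact W"
  by (metis clopen_in_def compact_Int_closed inf.absorb2)

lemma clopen_in_bounded: "compact A \<Longrightarrow> clopen_in A W \<Longrightarrow> bounded W"
  using clopen_in_compact compact_imp_bounded by blast

lemma clopen_in_open_trace: "clopen_in A W \<Longrightarrow> \<exists>G. open G \<and> A \<inter> G = W"
  using open_Compl[of "A - W"] by (intro exI[of _ "- (A - W)"]) (auto simp: clopen_in_def)

lemma totally_disconnected_connected_component:
  assumes "totally_disconnected X" "x \<in> X"
  shows "connected_component_of_set (top_of_set X) x = {x}"
proof -
  have "y = x" if y: "y \<in> connected_component_of_set (top_of_set X) x" for y
  proof -
    obtain S where "connectedin (top_of_set X) S" "x \<in> S" "y \<in> S"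
      using y by (auto simp: connected_component_of_set)
    then have "S \<subseteq> X" "connected S" by (auto simp: connectedin_subtopology)
    then show ?thesis
      using assms(1) \<open>x \<in> S\<close> \<open>y \<in> S\<close> unfolding totally_disconnected_def by blast
  qed
  then show ?thesis using assms(2) by (auto simp: connected_component_of_refl)
qed

lemma cantor_space_clopen_nbhd:
  fixes X :: "'a::metric_space set"
  assumes "cantor_space X" "x \<in> X" "e > 0"
  shows "\<exists>C. x \<in> C \<and> C \<subseteq> ball x e \<and> clopen_in X C"
proof -
  have cX: "compact X" and td: "totally_disconnected X"
    using assms(1) by (auto simp: cantor_space_def)
  define T where "T = top_of_set X"
  have "connected_component_of_set T x = {x}"
    unfolding T_def by (rule totally_disconnected_connected_component[OF td assms(2)])
  \<comment> \<open>in a compact Hausdorff space quasi-components are components, so the point is a quasi-component\<close>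
  moreover have "compact_space T" "Hausdorff_space T"
    using cX unfolding T_def by (auto simp: compact_space_subtopology Hausdorff_space_subtopology)
  ultimately have "{x} \<in> quasi_components_of T"
    using quasi_eq_connected_components_of[of T] assms(2)
    unfolding connected_components_of_def T_def by auto
  moreover have "compactin T (X - ball x e)"
    unfolding T_def by (simp add: compactin_subtopology compact_diff cX)
  ultimately have "separated_between T {x} (X - ball x e)"
    using separated_between_quasi_component_compact assms(3) by (fastforce simp: disjnt_def)
  then obtain U V where UV: "openin T U" "openin T V" "U \<union> V = X" "disjnt U V" "x \<in> U"
    "X - ball x e \<subseteq> V"
    unfolding separated_between_def T_def by auto
  have "X - U = V" "X - V = U" using UV by (auto simp: disjnt_def)
  then have "closedin T U" "closedin T V"
    using UV(1,2,3) unfolding T_def closedin_def by auto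
  then have "closed U" "closed V"
    unfolding T_def using compact_imp_closed[OF cX] closedin_closed_trans by blast+
  then have "clopen_in X U" using \<open>X - U = V\<close> UV(3) unfolding clopen_in_def by auto
  moreover have "U \<subseteq> ball x e" using UV by (auto simp: disjnt_def)
  ultimately show ?thesis using UV(5) by blast
qed

lemma cantor_space_clopen_in:
  assumes "cantor_space X" "clopen_in X W"
  shows "cantor_space W"
  unfolding cantor_space_def
proof (intro conjI ballI)
  show "compact W" using assms clopen_in_compact by (auto simp: cantor_space_def)
  show "totally_disconnected W"
    using assms clopen_in_subset unfolding cantor_space_def totally_disconnected_def by blast
  fix x assume x: "x \<in> W"
  obtain G where G: "open G" "X \<inter> G = W" using clopen_in_open_trace assms(2) by blast
  have "x islimpt X" using assms x clopen_in_subset by (force simp: cantor_space_def)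
  moreover have "eventually (\<lambda>y. y \<in> G) (at x)"
    using G x eventually_at_topological by blast
  ultimately have "x islimpt X \<inter> G" by (rule islimpt_Int_eventually)
  then show "x islimpt W" using G by simp
qed

lemma cantor_space_proper_clopen:
  assumes "cantor_space W" "W \<noteq> {}"
  obtains V where "V \<noteq> {}" "V \<noteq> W" "clopen_in W V"
proof -
  obtain u where u: "u \<in> W" using assms by blast
  then have "u islimpt W" using assms by (simp add: cantor_space_def)
  then obtain v where v: "v \<in> W" "v \<noteq> u" using islimpt_def by (metis UNIV_I open_UNIV)
  then obtain C where "u \<in> C" "C \<subseteq> ball u (dist u v)" "clopen_in W C"
    using cantor_space_clopen_nbhd[OF assms(1) u, of "dist u v"] by auto
  moreover have "v \<notin> C" using calculation by auto
  ultimately show ?thesis using v that by blast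
qed

section \<open>Clopen partitions\<close>

definition clopen_partition :: "'a::metric_space set \<Rightarrow> real \<Rightarrow> 'a set set \<Rightarrow> bool" where
  "clopen_partition P e F \<longleftrightarrow>
     finite F \<and> (\<forall>W\<in>F. W \<noteq> {} \<and> clopen_in P W \<and> diameter W < e) \<and> \<Union>F = P \<and> disjoint F"

lemma clopen_partition_dist_lt:
  assumes "clopen_partition P e F" "compact P" "W \<in> F" "x \<in> W" "y \<in> W"
  shows "dist x y < e"
proof -
  have "bounded W" using assms clopen_in_bounded by (auto simp: clopen_partition_def)
  then have "dist x y \<le> diameter W" using assms(4,5) by (rule diameter_bounded_bound)
  then show ?thesis using assms by (auto simp: clopen_partition_def)
qed

lemma clopen_partition_piece_unique:
  assumes "clopen_partition P e F" "V \<in> F" "W \<in> F" "x \<in> V" "x \<in> W"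
  shows "V = W"
  using assms unfolding clopen_partition_def pairwise_def disjnt_def by blast

lemma clopen_partition_of_cover:
  assumes "finite C" "compact P" "\<Union>C = P" "\<forall>W\<in>C. clopen_in P W \<and> diameter W < e"
  obtains F where "clopen_partition P e F"
proof -
  have "\<exists>F. finite F \<and> (\<forall>W\<in>F. W \<noteq> {} \<and> clopen_in P W \<and> diameter W < e) \<and> \<Union>F = \<Union>C \<and> disjoint F"
    using assms(1,4)
  proof (induction C rule: finite_induct)
    case empty
    show ?case by (intro exI[of _ "{}"]) auto
  next
    case (insert C0 C)
    have "\<forall>W\<in>C. clopen_in P W \<and> diameter W < e" using insert.prems by blast
    then obtain F where F: "finite F" "\<forall>W\<in>F. W \<noteq> {} \<and> clopen_in P W \<and> diameter W < e"
      "\<Union>F = \<Union>C" "disjoint F"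
      using insert.IH by auto
    define D where "D = C0 - \<Union>C"
    have "clopen_in P (\<Union>C)"
      using clopen_in_Union[OF insert.hyps(1)] compact_imp_closed[OF assms(2)] insert.prems by blast
    then have "clopen_in P D" unfolding D_def using clopen_in_Diff insert.prems by blast
    have "diameter D < e"
    proof -
      have "bounded C0" using clopen_in_bounded assms(2) insert.prems by blast
      then have "diameter D \<le> diameter C0" unfolding D_def by (intro diameter_subset) auto
      then show ?thesis using insert.prems by fastforce
    qed
    have U: "\<Union>(insert C0 C) = D \<union> \<Union>F" and disj: "\<forall>W\<in>F. disjnt D W"
      using F(3) unfolding D_def disjnt_def by blast+
    show ?case
    proof (cases "D = {}")
      case True
      then show ?thesis using F U by (intro exI[of _ F]) simp
    next
      case False
      have "disjoint (insert D F)"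
        using F(4) disj by (auto simp: pairwise_insert disjnt_sym)
      then show ?thesis
        using F U False \<open>clopen_in P D\<close> \<open>diameter D < e\<close> by (intro exI[of _ "insert D F"]) simp
    qed
  qed
  then show ?thesis using that assms(3) unfolding clopen_partition_def by auto
qed

lemma cantor_space_clopen_partition:
  assumes "cantor_space P" "e > 0"
  obtains F where "clopen_partition P e F"
proof -
  have cP: "compact P" using assms(1) by (simp add: cantor_space_def)
  have "\<forall>x\<in>P. \<exists>C. x \<in> C \<and> C \<subseteq> ball x (e/3) \<and> clopen_in P C"
    using cantor_space_clopen_nbhd[OF assms(1), of _ "e/3"] assms(2) by simp
  then obtain C where C: "\<And>x. x \<in> P \<Longrightarrow> x \<in> C x" "\<And>x. x \<in> P \<Longrightarrow> C x \<subseteq> ball x (e/3)"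
    "\<And>x. x \<in> P \<Longrightarrow> clopen_in P (C x)"
    by (auto dest!: bchoice)
  have "open (- (P - C x))" if "x \<in> P" for x
    using C(3)[OF that] open_Compl unfolding clopen_in_def by blast
  moreover have "P \<subseteq> (\<Union>x\<in>P. - (P - C x))" using C(1) by blast
  ultimately obtain K where K: "K \<subseteq> P" "finite K" "P \<subseteq> (\<Union>x\<in>K. - (P - C x))"
    using compactE_image[OF cP, of P "\<lambda>x. - (P - C x)"] by blast
  have UK: "\<Union>(C ` K) = P"
  proof
    show "\<Union>(C ` K) \<subseteq> P" using K(1) C(3) clopen_in_subset by blast
    show "P \<subseteq> \<Union>(C ` K)" using K(3) by blast
  qed
  have "diameter (C x) < e" if x: "x \<in> P" for x
  proof -
    have "dist u v \<le> 2 * e / 3" if "u \<in> C x" "v \<in> C x" for u v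
    proof -
      have "dist x u < e/3" "dist x v < e/3" using C(2)[OF x] that by auto
      then show ?thesis using dist_triangle3[of u v x] by linarith
    qed
    then have "diameter (C x) \<le> 2 * e / 3" using C(1)[OF x] by (intro diameter_le_dist_bound) auto
    then show ?thesis using assms(2) by linarith
  qed
  then have "\<forall>W\<in>C ` K. clopen_in P W \<and> diameter W < e" using K(1) C(3) by blast
  then show ?thesis using clopen_partition_of_cover[OF finite_imageI[OF K(2)] cP UK] that by blast
qed

lemma clopen_partition_split_piece:
  assumes "cantor_space P" "clopen_partition P e F" "F \<noteq> {}"
  obtains F' where "clopen_partition P e F'" "card F' = Suc (card F)"
proof -
  have fin: "finite F" and UF: "\<Union>F = P" and cP: "compact P"
    using assms by (auto simp: clopen_partition_def cantor_space_def)
  obtain W where W: "W \<in> F" using assms(3) by blast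
  then have "W \<noteq> {}" "clopen_in P W" "diameter W < e"
    using assms(2) by (auto simp: clopen_partition_def)
  moreover obtain V where V: "V \<noteq> {}" "V \<noteq> W" "clopen_in W V"
    using cantor_space_proper_clopen cantor_space_clopen_in assms(1) calculation by metis
  ultimately have VW: "clopen_in P V" "clopen_in P (W - V)" "V \<subseteq> W" "W - V \<noteq> {}"
    using clopen_in_trans clopen_in_Diff clopen_in_subset by blast+
  have "bounded W" using clopen_in_bounded cP \<open>clopen_in P W\<close> by blast
  then have "diameter V \<le> diameter W" "diameter (W - V) \<le> diameter W"
    using diameter_subset VW(3) Diff_subset by blast+
  then have diam: "diameter V < e" "diameter (W - V) < e" using \<open>diameter W < e\<close> by linarith+
  have other: "\<forall>U\<in>F - {W}. U \<inter> W = {}"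
    using assms(2) W by (auto simp: clopen_partition_def pairwise_def disjnt_def)
  define F' where "F' = insert V (insert (W - V) (F - {W}))"
  have "V \<notin> insert (W - V) (F - {W})" "W - V \<notin> F - {W}"
    using other V VW by blast+
  moreover have "card F = Suc (card (F - {W}))" using fin W by (rule card.remove)
  ultimately have "card F' = Suc (card F)"
    unfolding F'_def using fin by (simp add: card_insert_disjoint)
  moreover have "clopen_partition P e F'"
    unfolding clopen_partition_def
  proof (intro conjI)
    show "finite F'" using fin by (simp add: F'_def)
    show "\<forall>U\<in>F'. U \<noteq> {} \<and> clopen_in P U \<and> diameter U < e"
      using assms(2) VW diam V unfolding F'_def clopen_partition_def by auto
    have "\<Union>F' = W \<union> \<Union>(F - {W})" using VW(3) unfolding F'_def by auto
    then show "\<Union>F' = P" using UF W by blast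
    have "disjoint (F - {W})"
      using assms(2) pairwise_subset[of disjnt F] by (auto simp: clopen_partition_def)
    then show "disjoint F'"
      unfolding F'_def pairwise_insert using other VW(3) by (auto simp: disjnt_def)
  qed
  ultimately show ?thesis using that by blast
qed

lemma clopen_partition_card:
  assumes "cantor_space P" "P \<noteq> {}" "clopen_partition P e F" "card F \<le> m"
  obtains F' where "clopen_partition P e F'" "card F' = m"
proof -
  have "\<exists>F'. clopen_partition P e F' \<and> card F' = card F + k" for k
  proof (induction k)
    case 0
    show ?case using assms(3) by auto
  next
    case (Suc k)
    then obtain F' where F': "clopen_partition P e F'" "card F' = card F + k" by blast
    moreover have "F' \<noteq> {}" using F'(1) assms(2) by (auto simp: clopen_partition_def)
    ultimately obtain F'' where "clopen_partition P e F''" "card F'' = Suc (card F')"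
      using clopen_partition_split_piece[OF assms(1) F'(1)] by blast
    then show ?case using F'(2) by auto
  qed
  from this[of "m - card F"] show ?thesis using assms(4) that by auto
qed

section \<open>Matchings of clopen partitions\<close>

definition clopen_matching ::
    "'a::metric_space set \<Rightarrow> 'a set \<Rightarrow> 'a list \<Rightarrow> 'a list \<Rightarrow> ('a set \<times> 'a set) set \<Rightarrow> bool" where
  "clopen_matching A B zs ys M \<longleftrightarrow> finite M
    \<and> (\<forall>m\<in>M. fst m \<noteq> {} \<and> snd m \<noteq> {} \<and> clopen_in A (fst m) \<and> clopen_in B (snd m))
    \<and> \<Union>(fst ` M) = A \<and> \<Union>(snd ` M) = B
    \<and> (\<forall>m\<in>M. \<forall>m'\<in>M. m \<noteq> m' \<longrightarrow> fst m \<inter> fst m' = {} \<and> snd m \<inter> snd m' = {})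
    \<and> (\<forall>m\<in>M. \<forall>i<length zs. zs!i \<in> fst m \<longleftrightarrow> ys!i \<in> snd m)"

definition matching_mesh :: "('a::metric_space set \<times> 'a set) set \<Rightarrow> real \<Rightarrow> bool" where
  "matching_mesh M e \<longleftrightarrow> (\<forall>m\<in>M. diameter (fst m) < e \<and> diameter (snd m) < e)"

definition refines :: "('a set \<times> 'a set) set \<Rightarrow> ('a set \<times> 'a set) set \<Rightarrow> bool" where
  "refines M' M \<longleftrightarrow> (\<forall>m'\<in>M'. \<exists>m\<in>M. fst m' \<subseteq> fst m \<and> snd m' \<subseteq> snd m)"

lemma clopen_matchingD:
  assumes "clopen_matching A B zs ys M"
  shows "finite M" "\<And>m. m \<in> M \<Longrightarrow> fst m \<noteq> {}" "\<And>m. m \<in> M \<Longrightarrow> snd m \<noteq> {}"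
    "\<And>m. m \<in> M \<Longrightarrow> clopen_in A (fst m)" "\<And>m. m \<in> M \<Longrightarrow> clopen_in B (snd m)"
    "\<Union>(fst ` M) = A" "\<Union>(snd ` M) = B"
    "\<And>m m'. m \<in> M \<Longrightarrow> m' \<in> M \<Longrightarrow> m \<noteq> m' \<Longrightarrow> fst m \<inter> fst m' = {}"
    "\<And>m m'. m \<in> M \<Longrightarrow> m' \<in> M \<Longrightarrow> m \<noteq> m' \<Longrightarrow> snd m \<inter> snd m' = {}"
    "\<And>m i. m \<in> M \<Longrightarrow> i < length zs \<Longrightarrow> zs!i \<in> fst m \<longleftrightarrow> ys!i \<in> snd m"
  using assms unfolding clopen_matching_def by blast+

lemma clopen_matching_graph:
  assumes FP: "clopen_partition P e FP" and FQ: "clopen_partition Q e FQ" and r: "bij_betw r FP FQ"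
    and pts: "\<And>W i. W \<in> FP \<Longrightarrow> i < length zs \<Longrightarrow> zs!i \<in> W \<longleftrightarrow> ys!i \<in> r W"
  shows "clopen_matching P Q zs ys ((\<lambda>W. (W, r W)) ` FP) \<and> matching_mesh ((\<lambda>W. (W, r W)) ` FP) e"
proof -
  have rFP: "r ` FP = FQ" and inj: "inj_on r FP" using r by (auto simp: bij_betw_def)
  have "r W \<inter> r W' = {}" if "W \<in> FP" "W' \<in> FP" "W \<noteq> W'" for W W'
    using FQ inj_onD[OF inj _ that(1,2)] that rFP
    unfolding clopen_partition_def pairwise_def disjnt_def by blast
  moreover have "W \<inter> W' = {}" if "W \<in> FP" "W' \<in> FP" "W \<noteq> W'" for W W'
    using FP that unfolding clopen_partition_def pairwise_def disjnt_def by blast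
  moreover have "\<Union>(r ` FP) = Q" using FQ rFP by (simp add: clopen_partition_def)
  ultimately show ?thesis
    using FP FQ rFP pts unfolding clopen_matching_def matching_mesh_def clopen_partition_def
    by (auto simp: image_image)
qed

lemma cantor_space_clopen_partitions_same_card:
  assumes cP: "cantor_space P" and cQ: "cantor_space Q" and "P \<noteq> {}" "Q \<noteq> {}" "e > 0"
  obtains FP FQ where "clopen_partition P e FP" "clopen_partition Q e FQ" "card FP = card FQ"
proof -
  obtain FP0 where FP0: "clopen_partition P e FP0"
    using cantor_space_clopen_partition[OF cP \<open>e > 0\<close>] by blast
  obtain FQ0 where FQ0: "clopen_partition Q e FQ0"
    using cantor_space_clopen_partition[OF cQ \<open>e > 0\<close>] by blast
  obtain FP where "clopen_partition P e FP" "card FP = max (card FP0) (card FQ0)"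
    using clopen_partition_card[OF cP \<open>P \<noteq> {}\<close> FP0 max.cobounded1] by blast
  moreover obtain FQ where "clopen_partition Q e FQ" "card FQ = max (card FP0) (card FQ0)"
    using clopen_partition_card[OF cQ \<open>Q \<noteq> {}\<close> FQ0 max.cobounded2] by blast
  ultimately show ?thesis using that by simp
qed

lemma clopen_partition_piece_map:
  assumes F: "clopen_partition P e F" and "compact P" and dz: "distinct zs"
    and sep: "\<And>x y. x \<in> set zs \<Longrightarrow> y \<in> set zs \<Longrightarrow> x \<noteq> y \<Longrightarrow> e \<le> dist x y"
  obtains pa where "\<And>i. i < length zs \<Longrightarrow> zs!i \<in> P \<Longrightarrow> pa i \<in> F \<and> zs!i \<in> pa i"
    "inj_on pa {i. i < length zs \<and> zs!i \<in> P}"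
proof -
  define I where "I = {i. i < length zs \<and> zs!i \<in> P}"
  have "\<forall>i\<in>I. \<exists>W. W \<in> F \<and> zs!i \<in> W" using F unfolding I_def clopen_partition_def by blast
  then obtain pa where pa: "\<forall>i\<in>I. pa i \<in> F \<and> zs!i \<in> pa i" by (rule bchoice[THEN exE])
  have "inj_on pa I"
  proof (rule inj_onI)
    fix i j assume "i \<in> I" "j \<in> I" "pa i = pa j"
    then have ij: "zs!i \<in> pa i" "zs!j \<in> pa i" "pa i \<in> F" "i < length zs" "j < length zs"
      using pa by (auto simp: I_def)
    then have "dist (zs!i) (zs!j) < e" using clopen_partition_dist_lt[OF F \<open>compact P\<close>] by blast
    then have "zs!i = zs!j" using sep[of "zs!i" "zs!j"] nth_mem[OF ij(4)] nth_mem[OF ij(5)] by fastforce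
    then show "i = j" using dz ij(4,5) by (simp add: nth_eq_iff_index_eq)
  qed
  show ?thesis
  proof (rule that)
    show "pa i \<in> F \<and> zs!i \<in> pa i" if "i < length zs" "zs!i \<in> P" for i using pa that by (simp add: I_def)
    show "inj_on pa {i. i < length zs \<and> zs!i \<in> P}" using \<open>inj_on pa I\<close> by (simp add: I_def)
  qed
qed

lemma clopen_partitions_bij_respecting_points:
  assumes FP: "clopen_partition P e FP" and FQ: "clopen_partition Q e FQ" and card: "card FP = card FQ"
    and cpP: "compact P" and cpQ: "compact Q"
    and len: "length zs = length ys" and dz: "distinct zs" and dy: "distinct ys"
    and PQ: "\<And>i. i < length zs \<Longrightarrow> zs!i \<in> P \<longleftrightarrow> ys!i \<in> Q"
    and sep: "\<And>x y. x \<in> set zs \<union> set ys \<Longrightarrow> y \<in> set zs \<union> set ys \<Longrightarrow> x \<noteq> y \<Longrightarrow> e \<le> dist x y"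
  shows "\<exists>r. bij_betw r FP FQ \<and> (\<forall>W\<in>FP. \<forall>i<length zs. zs!i \<in> W \<longleftrightarrow> ys!i \<in> r W)"
proof -
  define I where "I = {i. i < length zs \<and> zs!i \<in> P}"
  have I_ys: "I = {i. i < length ys \<and> ys!i \<in> Q}" using PQ len by (auto simp: I_def)
  obtain pa where pa: "\<And>i. i < length zs \<Longrightarrow> zs!i \<in> P \<Longrightarrow> pa i \<in> FP \<and> zs!i \<in> pa i"
    "inj_on pa {i. i < length zs \<and> zs!i \<in> P}"
    by (rule clopen_partition_piece_map[OF FP cpP dz]) (use sep in auto)
  obtain qb where qb: "\<And>i. i < length ys \<Longrightarrow> ys!i \<in> Q \<Longrightarrow> qb i \<in> FQ \<and> ys!i \<in> qb i"
    "inj_on qb {i. i < length ys \<and> ys!i \<in> Q}"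
    by (rule clopen_partition_piece_map[OF FQ cpQ dy]) (use sep in auto)
  have paI: "pa i \<in> FP" "zs!i \<in> pa i" and qbI: "qb i \<in> FQ" "ys!i \<in> qb i" if "i \<in> I" for i
    using pa(1) qb(1) that len PQ by (auto simp: I_def)
  have fin: "finite FP" "finite FQ" using FP FQ by (auto simp: clopen_partition_def)
  have im: "pa ` I \<subseteq> FP" "qb ` I \<subseteq> FQ" using paI qbI by blast+
  have inj: "inj_on pa I" "inj_on qb I" using pa(2) qb(2) unfolding I_def I_ys[symmetric] .
  obtain r where r: "bij_betw r FP FQ" and rI: "\<And>i. i \<in> I \<Longrightarrow> r (pa i) = qb i"
    by (rule bij_betw_extend[OF fin card inj(1) im(1) inj(2) im(2)]) (rule that)
  have pts: "zs!i \<in> W \<longleftrightarrow> ys!i \<in> r W" if W: "W \<in> FP" and i: "i < length zs" for W i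
  proof (cases "i \<in> I")
    case True
    have rW: "r W \<in> FQ" using r W by (auto simp: bij_betw_def)
    have "zs!i \<in> W \<longleftrightarrow> W = pa i"
      using clopen_partition_piece_unique[OF FP W] paI[OF True] by blast
    also have "\<dots> \<longleftrightarrow> r W = qb i"
      using rI[OF True] paI[OF True] W r by (metis bij_betw_def inj_on_eq_iff)
    also have "\<dots> \<longleftrightarrow> ys!i \<in> r W"
      using clopen_partition_piece_unique[OF FQ rW] qbI[OF True] by blast
    finally show ?thesis .
  next
    case False
    then have "zs!i \<notin> P" "ys!i \<notin> Q" using PQ i by (auto simp: I_def)
    moreover have "W \<subseteq> P" "r W \<subseteq> Q"
      using FP FQ W r clopen_in_subset unfolding clopen_partition_def bij_betw_def by blast+
    ultimately show ?thesis by blast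
  qed
  then show ?thesis using r by blast
qed

lemma clopen_matching_exists:
  assumes cP: "cantor_space P" and cQ: "cantor_space Q" and "P \<noteq> {}" "Q \<noteq> {}" "e > 0"
    and len: "length zs = length ys" and dz: "distinct zs" and dy: "distinct ys"
    and PQ: "\<And>i. i < length zs \<Longrightarrow> zs!i \<in> P \<longleftrightarrow> ys!i \<in> Q"
  obtains N where "clopen_matching P Q zs ys N" "matching_mesh N e"
proof -
  obtain d where "d > 0" and d:
    "\<And>x y. x \<in> set zs \<union> set ys \<Longrightarrow> y \<in> set zs \<union> set ys \<Longrightarrow> x \<noteq> y \<Longrightarrow> d \<le> dist x y"
    using finite_set_separated[of "set zs \<union> set ys"] by blast
  define e' where "e' = min e d"
  have "e' > 0" using \<open>d > 0\<close> \<open>e > 0\<close> by (simp add: e'_def)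
  then obtain FP FQ where FP: "clopen_partition P e' FP" and FQ: "clopen_partition Q e' FQ"
    and card: "card FP = card FQ"
    using cantor_space_clopen_partitions_same_card[OF cP cQ \<open>P \<noteq> {}\<close> \<open>Q \<noteq> {}\<close>] by blast
  have cpt: "compact P" "compact Q" using cP cQ by (auto simp: cantor_space_def)
  have sep: "e' \<le> dist x y" if "x \<in> set zs \<union> set ys" "y \<in> set zs \<union> set ys" "x \<noteq> y" for x y
    using d[OF that] by (simp add: e'_def)
  obtain r where r: "bij_betw r FP FQ" and pts: "\<forall>W\<in>FP. \<forall>i<length zs. zs!i \<in> W \<longleftrightarrow> ys!i \<in> r W"
    using clopen_partitions_bij_respecting_points[OF FP FQ card cpt len dz dy PQ sep] by blast
  have "clopen_matching P Q zs ys ((\<lambda>W. (W, r W)) ` FP) \<and> matching_mesh ((\<lambda>W. (W, r W)) ` FP) e'"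
    using clopen_matching_graph[OF FP FQ r] pts by blast
  moreover have "matching_mesh N e" if "matching_mesh N e'" for N :: "('a set \<times> 'a set) set"
    using that by (force simp: matching_mesh_def e'_def)
  ultimately show ?thesis using that by blast
qed

lemma clopen_matching_UN:
  assumes M: "clopen_matching A B zs ys M"
    and NN: "\<And>m. m \<in> M \<Longrightarrow> clopen_matching (fst m) (snd m) zs ys (NN m)"
  shows "clopen_matching A B zs ys (\<Union>m\<in>M. NN m)" "refines (\<Union>m\<in>M. NN m) M"
proof -
  note md = clopen_matchingD[OF M]
  have sub: "fst u \<subseteq> fst m \<and> snd u \<subseteq> snd m" if "m \<in> M" "u \<in> NN m" for m u
    using clopen_matchingD(4,5)[OF NN[OF that(1)] that(2)] clopen_in_subset by blast
  then show "refines (\<Union>m\<in>M. NN m) M" unfolding refines_def by blast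
  show "clopen_matching A B zs ys (\<Union>m\<in>M. NN m)"
    unfolding clopen_matching_def
  proof (intro conjI)
    show "finite (\<Union>m\<in>M. NN m)" using md(1) NN clopen_matchingD(1) by blast
    show "\<forall>u\<in>\<Union>m\<in>M. NN m. fst u \<noteq> {} \<and> snd u \<noteq> {} \<and> clopen_in A (fst u) \<and> clopen_in B (snd u)"
      using clopen_matchingD(2-5)[OF NN] md(4,5) clopen_in_trans by blast
    have "\<Union>(fst ` (\<Union>m\<in>M. NN m)) = (\<Union>m\<in>M. \<Union>(fst ` NN m))" by blast
    also have "\<dots> = A" using clopen_matchingD(6)[OF NN] md(6) by simp
    finally show "\<Union>(fst ` (\<Union>m\<in>M. NN m)) = A" .
    have "\<Union>(snd ` (\<Union>m\<in>M. NN m)) = (\<Union>m\<in>M. \<Union>(snd ` NN m))" by blast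
    also have "\<dots> = B" using clopen_matchingD(7)[OF NN] md(7) by simp
    finally show "\<Union>(snd ` (\<Union>m\<in>M. NN m)) = B" .
    show "\<forall>u\<in>\<Union>m\<in>M. NN m. \<forall>u'\<in>\<Union>m\<in>M. NN m. u \<noteq> u' \<longrightarrow> fst u \<inter> fst u' = {} \<and> snd u \<inter> snd u' = {}"
    proof (intro ballI impI)
      fix u u' assume "u \<in> (\<Union>m\<in>M. NN m)" "u' \<in> (\<Union>m\<in>M. NN m)" "u \<noteq> u'"
      then obtain m m' where m: "m \<in> M" "u \<in> NN m" "m' \<in> M" "u' \<in> NN m'" by blast
      show "fst u \<inter> fst u' = {} \<and> snd u \<inter> snd u' = {}"
      proof (cases "m = m'")
        case True
        then show ?thesis using clopen_matchingD(8,9)[OF NN[OF m(1)]] m \<open>u \<noteq> u'\<close> by blast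
      next
        case False
        then show ?thesis using md(8,9) m sub[OF m(1,2)] sub[OF m(3,4)] by blast
      qed
    qed
    show "\<forall>u\<in>\<Union>m\<in>M. NN m. \<forall>i<length zs. zs!i \<in> fst u \<longleftrightarrow> ys!i \<in> snd u"
      using clopen_matchingD(10)[OF NN] by blast
  qed
qed

lemma clopen_matching_refine:
  assumes cA: "cantor_space A" and cB: "cantor_space B" and M: "clopen_matching A B zs ys M"
    and "e > 0" and len: "length zs = length ys" and dz: "distinct zs" and dy: "distinct ys"
  obtains M' where "clopen_matching A B zs ys M'" "refines M' M" "matching_mesh M' e"
proof -
  note md = clopen_matchingD[OF M]
  have "\<forall>m\<in>M. \<exists>N. clopen_matching (fst m) (snd m) zs ys N \<and> matching_mesh N e"
  proof
    fix m assume m: "m \<in> M"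
    show "\<exists>N. clopen_matching (fst m) (snd m) zs ys N \<and> matching_mesh N e"
      using clopen_matching_exists[OF cantor_space_clopen_in[OF cA md(4)[OF m]]
          cantor_space_clopen_in[OF cB md(5)[OF m]] md(2)[OF m] md(3)[OF m] \<open>e > 0\<close> len dz dy
          md(10)[OF m]]
      by blast
  qed
  then obtain NN where NN: "\<And>m. m \<in> M \<Longrightarrow> clopen_matching (fst m) (snd m) zs ys (NN m)"
    and NN_mesh: "\<And>m. m \<in> M \<Longrightarrow> matching_mesh (NN m) e"
    by (metis bchoice)
  have "matching_mesh (\<Union>m\<in>M. NN m) e" using NN_mesh unfolding matching_mesh_def by blast
  then show ?thesis using clopen_matching_UN[OF M NN] that by blast
qed

lemma clopen_matching_swap:
  assumes M: "clopen_matching A B zs ys M" and "length zs = length ys"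
  shows "clopen_matching B A ys zs (prod.swap ` M)"
proof -
  have "fst ` prod.swap ` M = snd ` M" "snd ` prod.swap ` M = fst ` M" by force+
  moreover have "\<forall>u\<in>prod.swap ` M. \<forall>u'\<in>prod.swap ` M. u \<noteq> u' \<longrightarrow> fst u \<inter> fst u' = {} \<and> snd u \<inter> snd u' = {}"
    using clopen_matchingD(8,9)[OF M] by fastforce
  ultimately show ?thesis using assms unfolding clopen_matching_def by auto
qed

lemma refines_swap: "refines M' M \<Longrightarrow> refines (prod.swap ` M') (prod.swap ` M)"
  unfolding refines_def by fastforce

lemma matching_mesh_swap: "matching_mesh M e \<Longrightarrow> matching_mesh (prod.swap ` M) e"
  unfolding matching_mesh_def by auto

section \<open>Brouwer's limit homeomorphism\<close>

locale refining_matchings =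
  fixes A B :: "'a::metric_space set" and zs ys :: "'a list"
    and S :: "nat \<Rightarrow> ('a set \<times> 'a set) set"
  assumes matching: "\<And>k. clopen_matching A B zs ys (S k)"
    and refining: "\<And>k. refines (S (Suc k)) (S k)"
    and mesh: "\<And>k. matching_mesh (S (Suc k)) (1 / real (Suc k))"
    and compact: "compact A" "compact B"
    and length_eq: "length zs = length ys"
begin

definition tracks :: "'a \<Rightarrow> 'a \<Rightarrow> bool" where
  "tracks x y \<longleftrightarrow> (\<forall>k. \<exists>m\<in>S k. x \<in> fst m \<and> y \<in> snd m)"

lemma piece_exists: "x \<in> A \<Longrightarrow> \<exists>m\<in>S k. x \<in> fst m"
  using clopen_matchingD(6)[OF matching] by blast

lemma piece_unique: "m \<in> S k \<Longrightarrow> m' \<in> S k \<Longrightarrow> x \<in> fst m \<Longrightarrow> x \<in> fst m' \<Longrightarrow> m = m'"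
  using clopen_matchingD(8)[OF matching] by blast

lemma refines_le: "j \<le> k \<Longrightarrow> refines (S k) (S j)"
proof (induction k rule: dec_induct)
  case base
  then show ?case by (auto simp: refines_def)
next
  case (step k)
  then show ?case using refining[of k] unfolding refines_def by (meson order_trans)
qed

lemma partner_mono:
  assumes "j \<le> k" "m \<in> S k" "m' \<in> S j" "x \<in> fst m" "x \<in> fst m'"
  shows "snd m \<subseteq> snd m'"
proof -
  obtain m'' where "m'' \<in> S j" "fst m \<subseteq> fst m''" "snd m \<subseteq> snd m''"
    using refines_le[OF assms(1)] assms(2) unfolding refines_def by blast
  moreover have "m'' = m'" using piece_unique calculation assms(3-5) by blast
  ultimately show ?thesis by blast
qed

lemma partner_dist_lt:
  assumes "m \<in> S (Suc k)" "y \<in> snd m" "y' \<in> snd m"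
  shows "dist y y' < 1 / real (Suc k)"
proof -
  have "bounded (snd m)" using clopen_in_bounded[OF compact(2) clopen_matchingD(5)[OF matching assms(1)]] .
  then have "dist y y' \<le> diameter (snd m)" using assms(2,3) by (rule diameter_bounded_bound)
  moreover have "diameter (snd m) < 1 / real (Suc k)" using mesh[of k] assms(1) by (auto simp: matching_mesh_def)
  ultimately show ?thesis by linarith
qed

lemma tracks_unique:
  assumes "tracks x y" "tracks x y'"
  shows "y = y'"
proof (rule ccontr)
  assume "y \<noteq> y'"
  then obtain k where k: "1 / real (Suc k) < dist y y'"
    using reals_Archimedean[of "dist y y'"] by (auto simp: inverse_eq_divide)
  obtain m m' where "m \<in> S (Suc k)" "x \<in> fst m" "y \<in> snd m" "m' \<in> S (Suc k)" "x \<in> fst m'" "y' \<in> snd m'"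
    using assms unfolding tracks_def by blast
  then show False using piece_unique partner_dist_lt k by fastforce
qed

text \<open>The partners of the pieces containing x form a nested sequence of nonempty closed subsets
  of the compact set B.\<close>

lemma tracks_exists:
  assumes x: "x \<in> A"
  shows "\<exists>y. tracks x y"
proof -
  define F where "F = {snd m | m k. m \<in> S k \<and> x \<in> fst m}"
  have "B \<inter> \<Inter>F \<noteq> {}"
  proof (rule compact_imp_fip[OF compact(2)])
    show "closed T" if "T \<in> F" for T
      using that clopen_matchingD(5)[OF matching] unfolding F_def clopen_in_def by blast
    show "B \<inter> \<Inter>F' \<noteq> {}" if F': "finite F'" "F' \<subseteq> F" for F'
    proof -
      have "\<forall>T\<in>F'. \<exists>k. \<exists>m\<in>S k. x \<in> fst m \<and> T = snd m" using F'(2) unfolding F_def by blast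
      then obtain lev where lev: "\<And>T. T \<in> F' \<Longrightarrow> \<exists>m\<in>S (lev T). x \<in> fst m \<and> T = snd m"
        by metis
      define K where "K = Max (insert 0 (lev ` F'))"
      obtain mK where mK: "mK \<in> S K" "x \<in> fst mK" using piece_exists[OF x] by blast
      have "snd mK \<subseteq> T" if T: "T \<in> F'" for T
      proof -
        have "lev T \<le> K" unfolding K_def using T F'(1) by simp
        then show ?thesis using lev[OF T] partner_mono mK by blast
      qed
      moreover have "snd mK \<subseteq> B" "snd mK \<noteq> {}"
        using clopen_matchingD(3,5)[OF matching mK(1)] clopen_in_subset by blast+
      ultimately show ?thesis by blast
    qed
  qed
  then obtain y where y: "y \<in> \<Inter>F" by blast
  have "\<exists>m\<in>S k. x \<in> fst m \<and> y \<in> snd m" for k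
    using piece_exists[OF x, of k] y unfolding F_def by blast
  then show ?thesis unfolding tracks_def by blast
qed

definition limit_map :: "'a \<Rightarrow> 'a" where
  "limit_map x = (SOME y. tracks x y)"

lemma tracks_limit_map: "x \<in> A \<Longrightarrow> tracks x (limit_map x)"
  unfolding limit_map_def using tracks_exists by (rule someI_ex)

lemma limit_map_eq: "x \<in> A \<Longrightarrow> tracks x y \<Longrightarrow> limit_map x = y"
  using tracks_limit_map tracks_unique by blast

lemma limit_map_partner: "x \<in> A \<Longrightarrow> m \<in> S k \<Longrightarrow> x \<in> fst m \<Longrightarrow> limit_map x \<in> snd m"
  using tracks_limit_map piece_unique unfolding tracks_def by blast

lemma limit_map_in: "x \<in> A \<Longrightarrow> limit_map x \<in> B"
  using limit_map_partner piece_exists clopen_matchingD(5)[OF matching] clopen_in_subset by blast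

text \<open>Points in a common piece of the matching S (Suc k) are mapped into a common partner piece,
  whose diameter is below 1 / (k + 1).\<close>

lemma continuous_on_limit_map: "continuous_on A limit_map"
  unfolding continuous_on_iff
proof (intro ballI allI impI)
  fix x and e :: real assume x: "x \<in> A" and e: "e > 0"
  obtain k where k: "1 / real (Suc k) < e"
    using reals_Archimedean[OF e] by (auto simp: inverse_eq_divide)
  obtain m where m: "m \<in> S (Suc k)" "x \<in> fst m" using piece_exists[OF x] by blast
  obtain G where G: "open G" "A \<inter> G = fst m"
    using clopen_in_open_trace[OF clopen_matchingD(4)[OF matching m(1)]] by blast
  then obtain d where d: "d > 0" "ball x d \<subseteq> G" using m(2) open_contains_ball by blast
  show "\<exists>d>0. \<forall>x'\<in>A. dist x' x < d \<longrightarrow> dist (limit_map x') (limit_map x) < e"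
  proof (intro exI conjI ballI impI)
    fix x' assume x': "x' \<in> A" "dist x' x < d"
    then have "x' \<in> ball x d" by (simp add: dist_commute)
    then have "x' \<in> fst m" using x'(1) d(2) G(2) by blast
    then have "dist (limit_map x') (limit_map x) < 1 / real (Suc k)"
      using partner_dist_lt[OF m(1)] limit_map_partner m x x' by blast
    then show "dist (limit_map x') (limit_map x) < e" using k by linarith
  qed (rule d(1))
qed

lemma swap: "refining_matchings B A ys zs (\<lambda>k. prod.swap ` S k)"
  using matching refining mesh compact length_eq
  by unfold_locales (auto intro: clopen_matching_swap refines_swap matching_mesh_swap)

lemma tracks_swap: "refining_matchings.tracks (\<lambda>k. prod.swap ` S k) y x \<longleftrightarrow> tracks x y"
  unfolding refining_matchings.tracks_def[OF swap] tracks_def by force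

lemma homeomorphism_limit_map:
  "homeomorphism A B limit_map (refining_matchings.limit_map (\<lambda>k. prod.swap ` S k))"
proof -
  interpret inv: refining_matchings B A ys zs "\<lambda>k. prod.swap ` S k" by (rule swap)
  have "inv.limit_map (limit_map x) = x" if "x \<in> A" for x
    using inv.limit_map_eq limit_map_in tracks_limit_map tracks_swap that by blast
  moreover have "limit_map (inv.limit_map y) = y" if "y \<in> B" for y
    using limit_map_eq inv.limit_map_in inv.tracks_limit_map tracks_swap that by blast
  ultimately show ?thesis
    using continuous_on_limit_map inv.continuous_on_limit_map limit_map_in inv.limit_map_in
    by (intro homeomorphismI) auto
qed

end

lemma clopen_matching_refining_sequence:
  assumes cA: "cantor_space A" and cB: "cantor_space B" and M0: "clopen_matching A B zs ys M0"
    and len: "length zs = length ys" and dz: "distinct zs" and dy: "distinct ys"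
  obtains S where "S 0 = M0" "refining_matchings A B zs ys S"
proof -
  have "\<exists>S. \<forall>k. (clopen_matching A B zs ys (S k) \<and> (k = 0 \<longrightarrow> S k = M0))
          \<and> refines (S (Suc k)) (S k) \<and> matching_mesh (S (Suc k)) (1 / real (Suc k))"
  proof (rule dependent_nat_choice)
    show "\<exists>M. clopen_matching A B zs ys M \<and> (0 = (0::nat) \<longrightarrow> M = M0)" using M0 by blast
    fix M and k :: nat assume "clopen_matching A B zs ys M \<and> (k = 0 \<longrightarrow> M = M0)"
    then have M: "clopen_matching A B zs ys M" by blast
    have "0 < 1 / real (Suc k)" by simp
    then obtain M' where "clopen_matching A B zs ys M'" "refines M' M"
      "matching_mesh M' (1 / real (Suc k))"
      using clopen_matching_refine[OF cA cB M _ len dz dy] by blast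
    then show "\<exists>M'. (clopen_matching A B zs ys M' \<and> (Suc k = 0 \<longrightarrow> M' = M0))
        \<and> refines M' M \<and> matching_mesh M' (1 / real (Suc k))" by blast
  qed
  then obtain S where S: "\<forall>k. (clopen_matching A B zs ys (S k) \<and> (k = 0 \<longrightarrow> S k = M0))
          \<and> refines (S (Suc k)) (S k) \<and> matching_mesh (S (Suc k)) (1 / real (Suc k))"
    by (rule exE)
  have "S 0 = M0" using S by blast
  moreover have "refining_matchings A B zs ys S"
    using S cA cB len by unfold_locales (auto simp: cantor_space_def)
  ultimately show ?thesis by (rule that)
qed

lemma clopen_matching_homeomorphism:
  assumes cA: "cantor_space A" and cB: "cantor_space B" and M0: "clopen_matching A B zs ys M0"
    and len: "length zs = length ys" and dz: "distinct zs" and dy: "distinct ys"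
    and zA: "set zs \<subseteq> A"
  obtains h g where "homeomorphism A B h g" "map h zs = ys"
    "\<And>m x. m \<in> M0 \<Longrightarrow> x \<in> fst m \<Longrightarrow> h x \<in> snd m"
    "\<And>m y. m \<in> M0 \<Longrightarrow> y \<in> snd m \<Longrightarrow> g y \<in> fst m"
proof -
  obtain S where S0: "S 0 = M0" and S: "refining_matchings A B zs ys S"
    by (rule clopen_matching_refining_sequence[OF cA cB M0 len dz dy])
  interpret refining_matchings A B zs ys S by (rule S)
  interpret inv: refining_matchings B A ys zs "\<lambda>k. prod.swap ` S k" by (rule swap)
  have maps: "map limit_map zs = ys"
  proof (rule nth_equalityI)
    fix i assume "i < length (map limit_map zs)"
    then have i: "i < length zs" by simp
    then have "zs!i \<in> A" using zA nth_mem by blast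
    moreover have "tracks (zs!i) (ys!i)"
      using piece_exists[OF \<open>zs!i \<in> A\<close>] clopen_matchingD(10)[OF matching _ i] unfolding tracks_def by blast
    ultimately show "map limit_map zs ! i = ys ! i" using limit_map_eq i by simp
  qed (simp add: len)
  have forward: "limit_map x \<in> snd m" if m: "m \<in> M0" "x \<in> fst m" for m x
  proof -
    have "x \<in> A" using clopen_in_subset[OF clopen_matchingD(4)[OF M0 m(1)]] m(2) by blast
    then show ?thesis using limit_map_partner m S0 by blast
  qed
  have backward: "inv.limit_map y \<in> fst m" if m: "m \<in> M0" "y \<in> snd m" for m y
  proof -
    have "y \<in> B" using clopen_in_subset[OF clopen_matchingD(5)[OF M0 m(1)]] m(2) by blast
    moreover have "prod.swap m \<in> prod.swap ` S 0" using m(1) S0 by blast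
    ultimately show ?thesis using inv.limit_map_partner[of y "prod.swap m" 0] m(2) by simp
  qed
  show ?thesis by (rule that[OF homeomorphism_limit_map maps forward backward])
qed

lemma clopen_partition_Lebesgue:
  assumes U: "clopen_partition X e U" and "compact X"
  obtains \<delta> where "\<delta> > 0" "\<forall>x\<in>X. \<forall>y\<in>X. dist x y < \<delta> \<longrightarrow> (\<exists>W\<in>U. x \<in> W \<and> y \<in> W)"
proof (cases "U = {}")
  case True
  then have "X = {}" using U by (simp add: clopen_partition_def)
  then show ?thesis using that[of 1] by simp
next
  case False
  define C where "C = (\<lambda>W. - (X - W)) ` U"
  have "open G" if "G \<in> C" for G
    using that U open_Compl unfolding C_def clopen_partition_def clopen_in_def by blast
  moreover have "X \<subseteq> \<Union>C" using U unfolding C_def clopen_partition_def by blast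
  moreover have "C \<noteq> {}" using False by (simp add: C_def)
  ultimately obtain \<delta> where \<delta>: "\<delta> > 0" "\<And>T. T \<subseteq> X \<Longrightarrow> diameter T < \<delta> \<Longrightarrow> \<exists>G\<in>C. T \<subseteq> G"
    using Lebesgue_number_lemma[OF \<open>compact X\<close> \<open>C \<noteq> {}\<close> \<open>X \<subseteq> \<Union>C\<close>] by blast
  have "\<exists>W\<in>U. x \<in> W \<and> y \<in> W" if xy: "x \<in> X" "y \<in> X" "dist x y < \<delta>" for x y
  proof -
    have "diameter {x, y} \<le> dist x y"
      by (rule diameter_le_dist_bound) (auto simp: dist_commute)
    then obtain G where "G \<in> C" "{x, y} \<subseteq> G" using \<delta>(2)[of "{x, y}"] xy by force
    then show ?thesis using xy(1,2) unfolding C_def by blast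
  qed
  then show ?thesis using that \<delta>(1) by blast
qed

lemma dC0_lt_clopen_partition:
  assumes U: "clopen_partition X e U" and "compact X" "X \<noteq> {}"
    and moves: "\<And>x. x \<in> X \<Longrightarrow> \<exists>W\<in>U. x \<in> W \<and> f x \<in> W"
  shows "dC0 X f id < e"
proof -
  have "finite U" "U \<noteq> {}" using U \<open>X \<noteq> {}\<close> by (auto simp: clopen_partition_def)
  define c where "c = Max (diameter ` U)"
  have "c < e" using U \<open>finite U\<close> \<open>U \<noteq> {}\<close> by (simp add: c_def clopen_partition_def)
  have "dist (f x) x \<le> c" if x: "x \<in> X" for x
  proof -
    obtain W where W: "W \<in> U" "x \<in> W" "f x \<in> W" using moves[OF x] by blast
    have "bounded W" using U W(1) clopen_in_bounded[OF \<open>compact X\<close>] by (auto simp: clopen_partition_def)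
    then have "dist (f x) x \<le> diameter W" using W(3,2) by (rule diameter_bounded_bound)
    also have "\<dots> \<le> c" using \<open>finite U\<close> W(1) by (simp add: c_def)
    finally show ?thesis .
  qed
  then have "dC0 X f id \<le> c" using \<open>X \<noteq> {}\<close> unfolding dC0_def by (auto intro!: cSUP_least)
  then show ?thesis using \<open>c < e\<close> by linarith
qed

lemma dist_le_dn: "i < length zs \<Longrightarrow> dist (zs!i) (ys!i) \<le> dn zs ys"
  unfolding dn_def by (rule Max_ge) auto

lemma clopen_partition_homeomorphism:
  assumes cX: "cantor_space X" and U: "clopen_partition X e U"
    and len: "length zs = length ys" and dz: "distinct zs" and dy: "distinct ys" and zX: "set zs \<subseteq> X"
    and same: "\<forall>i<length zs. \<exists>W\<in>U. zs!i \<in> W \<and> ys!i \<in> W"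
  obtains h g where "homeomorphism X X h g" "map h zs = ys"
    "\<And>x. x \<in> X \<Longrightarrow> \<exists>W\<in>U. x \<in> W \<and> h x \<in> W" "\<And>x. x \<in> X \<Longrightarrow> \<exists>W\<in>U. x \<in> W \<and> g x \<in> W"
proof -
  have pts: "zs!i \<in> W \<longleftrightarrow> ys!i \<in> id W" if W: "W \<in> U" and i: "i < length zs" for W i
  proof -
    obtain W' where "W' \<in> U" "zs!i \<in> W'" "ys!i \<in> W'" using same i by blast
    then show ?thesis using clopen_partition_piece_unique[OF U] W by auto
  qed
  have M0: "clopen_matching X X zs ys ((\<lambda>W. (W, id W)) ` U)"
    using clopen_matching_graph[OF U U bij_betw_id pts] by blast
  obtain h g where hg: "homeomorphism X X h g" "map h zs = ys"
    and h: "\<And>m x. m \<in> (\<lambda>W. (W, id W)) ` U \<Longrightarrow> x \<in> fst m \<Longrightarrow> h x \<in> snd m"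
    and g: "\<And>m y. m \<in> (\<lambda>W. (W, id W)) ` U \<Longrightarrow> y \<in> snd m \<Longrightarrow> g y \<in> fst m"
    by (rule clopen_matching_homeomorphism[OF cX cX M0 len dz dy zX]) (rule that)
  have moves: "\<exists>W\<in>U. x \<in> W \<and> h x \<in> W" "\<exists>W\<in>U. x \<in> W \<and> g x \<in> W" if x: "x \<in> X" for x
  proof -
    obtain W where W: "W \<in> U" "x \<in> W" using U x unfolding clopen_partition_def by blast
    then have "h x \<in> W" "g x \<in> W" using h[of "(W, W)" x] g[of "(W, W)" x] by auto
    then show "\<exists>W\<in>U. x \<in> W \<and> h x \<in> W" "\<exists>W\<in>U. x \<in> W \<and> g x \<in> W" using W by blast+
  qed
  show ?thesis by (rule that[OF hg moves])
qed

lemma clopen_partition_moves_close_tuples: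
  assumes cX: "cantor_space X" and U: "clopen_partition X e U"
    and \<delta>: "\<forall>x\<in>X. \<forall>y\<in>X. dist x y < \<delta> \<longrightarrow> (\<exists>W\<in>U. x \<in> W \<and> y \<in> W)"
    and "zs \<noteq> []" and len: "length zs = length ys" and zX: "set zs \<subseteq> X" and yX: "set ys \<subseteq> X"
    and dz: "distinct zs" and dy: "distinct ys" and "dn zs ys < \<delta>"
  shows "\<exists>\<phi> \<psi>. homeomorphism X X \<phi> \<psi> \<and> max (dC0 X \<phi> id) (dC0 X \<psi> id) < e \<and> map \<phi> zs = ys"
proof -
  have "X \<noteq> {}" using \<open>zs \<noteq> []\<close> zX by (cases zs) auto
  have same: "\<forall>i<length zs. \<exists>W\<in>U. zs!i \<in> W \<and> ys!i \<in> W"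
  proof (intro allI impI)
    fix i assume i: "i < length zs"
    have "zs!i \<in> X" "ys!i \<in> X" using zX yX i len nth_mem by (metis subsetD)+
    moreover have "dist (zs!i) (ys!i) < \<delta>" using dist_le_dn[OF i, of ys] \<open>dn zs ys < \<delta>\<close> by linarith
    ultimately show "\<exists>W\<in>U. zs!i \<in> W \<and> ys!i \<in> W" using \<delta> by blast
  qed
  obtain h g where hg: "homeomorphism X X h g" "map h zs = ys"
    and moves: "\<And>x. x \<in> X \<Longrightarrow> \<exists>W\<in>U. x \<in> W \<and> h x \<in> W" "\<And>x. x \<in> X \<Longrightarrow> \<exists>W\<in>U. x \<in> W \<and> g x \<in> W"
    by (rule clopen_partition_homeomorphism[OF cX U len dz dy zX same]) (rule that)
  have "dC0 X h id < e" "dC0 X g id < e"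
    using dC0_lt_clopen_partition[OF U _ \<open>X \<noteq> {}\<close>] moves cX by (auto simp: cantor_space_def)
  then show ?thesis using hg by auto
qed

theorem lemma1p1:
  fixes X :: "'a::metric_space set"
  assumes "cantor_space X"
  shows "property_star X"
  unfolding property_star_def
proof (intro allI impI)
  fix \<epsilon> :: real assume "\<epsilon> > 0"
  obtain U where U: "clopen_partition X \<epsilon> U"
    using cantor_space_clopen_partition[OF assms \<open>\<epsilon> > 0\<close>] by blast
  moreover have "compact X" using assms by (simp add: cantor_space_def)
  ultimately obtain \<delta> where "\<delta> > 0"
    and \<delta>: "\<forall>x\<in>X. \<forall>y\<in>X. dist x y < \<delta> \<longrightarrow> (\<exists>W\<in>U. x \<in> W \<and> y \<in> W)"
    using clopen_partition_Lebesgue by blast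
  have "\<exists>\<phi> \<psi>. homeomorphism X X \<phi> \<psi> \<and> max (dC0 X \<phi> id) (dC0 X \<psi> id) < \<epsilon> \<and> map \<phi> zs = ys"
    if "1 \<le> n" "length zs = n \<and> length ys = n \<and> set zs \<subseteq> X \<and> set ys \<subseteq> X \<and>
      distinct zs \<and> distinct ys \<and> dn zs ys < \<delta>" for n zs ys
    by (rule clopen_partition_moves_close_tuples[OF assms U \<delta>]) (use that in auto)
  then show "\<exists>\<delta>>0. \<forall>n\<ge>1. \<forall>zs ys. length zs = n \<and> length ys = n \<and> set zs \<subseteq> X \<and> set ys \<subseteq> X \<and>
      distinct zs \<and> distinct ys \<and> dn zs ys < \<delta> \<longrightarrow>
      (\<exists>\<phi> \<psi>. homeomorphism X X \<phi> \<psi> \<and> max (dC0 X \<phi> id) (dC0 X \<psi> id) < \<epsilon> \<and> map \<phi> zs = ys)"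
    using \<open>\<delta> > 0\<close> by blast
qed

end
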